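(* Let $n\ge 2$. To each line of play of Planted Brussels Sprouts of order $n$ associate a sequence $(a_1,\dots,a_{n-1})$ as follows. Suppose the $k$-th move joins free arms with short labels $i$ and $j$ lying in a common region. In that region, just before the move, let $i^-$ and $j^-$ be the short labels of the free arms immediately counterclockwise from the arm $i$ and from the arm $j$, respectively. Set $a_k=\min(i^-,j^-)$. Then distinct lines of play give distinct sequences. Moreover, the set of sequences obtained is exactly the set of parking functions of length $n-1$.
   Context: Planted Brussels Sprouts of order $n$: start with a closed disk with $n$ marked points on its boundary circle, labeled $1,\dots,n$ in clockwise order. Attached to each marked point is an arm, a short segment pointing into the interior of the disk; these arms are free. A move consists of two steps. First, choose two free arms and join their free ends by a simple curve (an arc) in the disk that does not intersect any previously drawn arc or arm; the two joined arms cease to be free. Second, mark a point (a notch) on the arc, from which two new free arms emanate, one on each side of the arc. The game ends when no move is possible. A line of play is the full sequence of moves. Two lines of play are the same iff for each $k$ the arms joined at the $k$-th move coincide. Arms are identified by long labels: the original arm $i$ has long label $i$, and when arms with long labels $\alpha,\beta$ are joined, the new arms have long labels $(\alpha,\beta)$ and $(\beta,\alpha)$. Short labels: the original arm at point $i$ has short label $i$. If an arc joins arms with short labels $i$ and $j$, the two new arms receive short labels $i$ and $j$, placed so that, going clockwise around the notch, one sees the old arm $i$, the new arm $i$, the old arm $j$, and the new arm $j$. Regions and subgames: at any stage, the drawn arcs divide the disk into regions. The free arms in a region form a subgame, and any move joins two free arms of the same region. Within a region, the free arms carry distinct short labels and have a cyclic (clockwise) order around the region. "Immediately counterclockwise"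 refers to the preceding free arm in this cyclic order. A parking function of length $n-1$ is a sequence $(a_1,\dots,a_{n-1})$ of integers in $\{1,\dots,n-1\}$ such that, if it is rearranged in weakly increasing order $a'_1\le\cdots\le a'_{n-1}$, then $a'_i\le i$ for all $i$. *)

theory Defs
  imports Main
begin

text \<open>Arms are identified by their long labels: an original arm has long label i,
  joining arms alpha, beta creates the arms (alpha,beta) and (beta,alpha).\<close>
datatype arm = Orig nat | New arm arm

fun short :: "arm \<Rightarrow> nat" where
  "short (Orig i) = i"
| "short (New a b) = short a"

text \<open>A position is a list of regions; each region is the list of its free arms
  in clockwise cyclic order (up to rotation).  Joining arms alpha and beta of a region
  whose clockwise order is alpha, xs, beta, ys splits it into the region with clockwise
  order xs, (alpha,beta) and the region with clockwise order ys, (beta,alpha).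
  The arm immediately counterclockwise from alpha is last (beta # ys), and the arm
  immediately counterclockwise from beta is last (alpha # xs).
  play S ms as: from position S, the full line of play ms (k-th entry = the set of
  the two arms joined at move k) is played until no move is possible, and as is
  the associated sequence a_k = min(i^-, j^-).\<close>
inductive play :: "arm list list \<Rightarrow> arm set list \<Rightarrow> nat list \<Rightarrow> bool" where
  stop: "(\<forall>R\<in>set S. length R \<le> 1) \<Longrightarrow> play S [] []"
| step: "\<lbrakk> S = S1 @ R # S2; rotate k R = \<alpha> # xs @ \<beta> # ys; \<alpha> \<noteq> \<beta>;
           play (S1 @ (xs @ [New \<alpha> \<beta>]) # (ys @ [New \<beta> \<alpha>]) # S2) ms as \<rbrakk>
         \<Longrightarrow> play S ({\<alpha>, \<beta>} # ms)
               (min (short (last (\<beta> # ys))) (short (last (\<alpha> # xs))) # as)"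

definition init_pos :: "nat \<Rightarrow> arm list list" where
  "init_pos n = [map Orig [1..<n+1]]"

definition parking_function :: "nat \<Rightarrow> nat list \<Rightarrow> bool" where
  "parking_function m a \<longleftrightarrow> length a = m \<and> set a \<subseteq> {1..m} \<and>
     (\<forall>i<m. sort a ! i \<le> i + 1)"

end

theory Submission
  imports Defs "HOL-Library.Multiset"
begin

(*
  Around every region the short labels of the free arms are distinct and increase clockwise up to
  rotation. Hence a move with entry P = min(i^-, j^-) in a region with label set C splits C into
  the cyclic arc of the labels z with P < z <= Q, where Q = max(i^-, j^-), and its complement;
  the two joined arms are the cyclic successors of P and Q in C.

  Call a multiset M parking on C if |M| + 1 = |C| and, for every x below Max C, C has at most as
  many elements <= x as M has entries <= x; for C = {1..n} these are the parking functions of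
  length n - 1. A sequence is produced by a complete line of play iff, for every region, its
  entries lying in the region's label set are parking on it. The inductive step: M + {P} is
  parking on C iff, for some Q, the entries in (P, Q] park on the arc and the remaining ones on
  its complement; and this Q is unique, being the first point beyond P where the arc holds more
  labels than entries. Uniqueness of Q recovers every move from the sequence.
*)

section \<open>Parking multisets on a finite label set\<close>

definition card_le :: "nat set \<Rightarrow> nat \<Rightarrow> nat" where
  "card_le C x = card {z \<in> C. z \<le> x}"

definition count_le :: "nat multiset \<Rightarrow> nat \<Rightarrow> nat" where
  "count_le M x = size {#z \<in># M. z \<le> x#}"

definition parking_on :: "nat set \<Rightarrow> nat multiset \<Rightarrow> bool" where
  "parking_on C M \<longleftrightarrow> finite C \<and> C \<noteq> {} \<and> size M + 1 = card C \<and> set_mset M \<subseteq> C \<and>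
     (\<forall>x < Max C. card_le C x \<le> count_le M x)"

lemma size_filter_mset_split: "size M = size {#z \<in># M. P z#} + size {#z \<in># M. \<not> P z#}"
  by (metis multiset_partition size_union)

lemma card_le_Int_Diff: "finite C \<Longrightarrow> card_le C x = card_le (C \<inter> I) x + card_le (C - I) x"
proof -
  have "{z \<in> C \<inter> I. z \<le> x} = {z \<in> C. z \<le> x} \<inter> I" "{z \<in> C - I. z \<le> x} = {z \<in> C. z \<le> x} - I"
    by auto
  then show "finite C \<Longrightarrow> ?thesis" unfolding card_le_def by (simp add: card_Int_Diff)
qed

lemma count_le_filter_split:
  "count_le M x = count_le {#z \<in># M. z \<in> I#} x + count_le {#z \<in># M. z \<notin> I#} x"
  unfolding count_le_def filter_filter_mset by (subst size_filter_mset_split[where P = "\<lambda>z. z \<in> I"])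
    (simp add: filter_filter_mset conj_commute)

lemma count_le_add_mset [simp]:
  "count_le (add_mset p N) x = (if p \<le> x then 1 else 0) + count_le N x"
  unfolding count_le_def by simp

lemma card_le_ge_Max:
  assumes "finite C" "Max C \<le> x" shows "card_le C x = card C"
proof -
  have "{z \<in> C. z \<le> x} = C" using assms by (auto dest: Max_ge)
  then show ?thesis unfolding card_le_def by simp
qed

lemma count_le_ge_Max:
  assumes "finite C" "set_mset M \<subseteq> C" "Max C \<le> x" shows "count_le M x = size M"
proof -
  have "{#z \<in># M. z \<le> x#} = {#z \<in># M. True#}"
    using assms by (intro filter_mset_cong) (auto dest: Max_ge)
  then show ?thesis unfolding count_le_def by simp
qed

lemma parking_on_card_le_below:
  "parking_on C M \<Longrightarrow> x < Max C \<Longrightarrow> card_le C x \<le> count_le M x"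
  unfolding parking_on_def by blast

lemma parking_on_card_le:
  assumes "parking_on C M" shows "card_le C x \<le> count_le M x + 1"
proof (cases "x < Max C")
  case True
  then show ?thesis using parking_on_card_le_below[OF assms] by fastforce
next
  case False
  then show ?thesis using assms card_le_ge_Max count_le_ge_Max unfolding parking_on_def
    by (metis le_refl not_less)
qed

lemma parking_on_less_Max:
  assumes park: "parking_on C M" and "z \<in># M"
  shows "z < Max C"
proof (rule ccontr)
  assume "\<not> z < Max C"
  moreover have fin: "finite C" and size: "size M + 1 = card C" and sub: "set_mset M \<subseteq> C"
    using park unfolding parking_on_def by auto
  ultimately have z: "z = Max C" using \<open>z \<in># M\<close> by (meson Max_ge le_neq_implies_less subsetD)
  have "card C \<ge> 2" using size \<open>z \<in># M\<close> by (cases M) auto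
  moreover have "C \<noteq> {}" using size by auto
  ultimately have "card (C - {Max C}) \<noteq> 0" using fin by (simp add: card_Diff_singleton)
  then obtain y where "y \<in> C - {Max C}" by (metis card.empty ex_in_conv)
  then have y: "y < Max C" using fin by (simp add: order.not_eq_order_implies_strict)
  define x where "x = Max C - 1"
  have "w \<le> x \<longleftrightarrow> w < Max C" for w unfolding x_def using y by linarith
  then have "{w \<in> C. w \<le> x} = C - {Max C}" using fin by (auto dest: Max_ge simp: less_le)
  then have "card_le C x = card C - 1" unfolding card_le_def using fin \<open>C \<noteq> {}\<close> by (simp add: card_Diff_singleton)
  moreover have "count_le M x < size M"
  proof -
    have "z \<in># {#w \<in># M. \<not> w \<le> x#}" using \<open>z \<in># M\<close> z y unfolding x_def by simp
    then have "size {#w \<in># M. \<not> w \<le> x#} \<noteq> 0" by auto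
    then show ?thesis unfolding count_le_def using size_filter_mset_split[of M "\<lambda>w. w \<le> x"] by linarith
  qed
  moreover have "card_le C x \<le> count_le M x" using parking_on_card_le_below[OF park] y unfolding x_def by simp
  ultimately show False using size by linarith
qed

lemma parking_on_add_msetI:
  assumes "p \<in> C" "q \<in> C" "p < q"
    and A: "parking_on (C \<inter> {p<..q}) {#z \<in># N. z \<in> {p<..q}#}"
    and B: "parking_on (C - {p<..q}) {#z \<in># N. z \<notin> {p<..q}#}"
  shows "parking_on C (add_mset p N)"
proof -
  let ?A = "C \<inter> {p<..q}" and ?B = "C - {p<..q}"
  let ?NA = "{#z \<in># N. z \<in> {p<..q}#}" and ?NB = "{#z \<in># N. z \<notin> {p<..q}#}"
  have finA: "finite ?A" and finB: "finite ?B" using A B unfolding parking_on_def by auto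
  then have fin: "finite C" by (metis Int_Diff_Un finite_UnI)
  have "set_mset ?NA \<subseteq> C" "set_mset ?NB \<subseteq> C" using A B unfolding parking_on_def by auto
  then have NC: "set_mset N \<subseteq> C" by auto
  have MaxA: "Max ?A = q" using assms(2,3) finA by (intro Max_eqI) auto
  have pB: "p \<in> ?B" using \<open>p \<in> C\<close> by simp
  have size: "size (add_mset p N) + 1 = card C"
    using A B size_filter_mset_split[of N "\<lambda>z. z \<in> {p<..q}"] card_Int_Diff[OF fin, of "{p<..q}"]
    unfolding parking_on_def by simp
  have "card_le C x \<le> count_le (add_mset p N) x" if x: "x < Max C" for x
  proof -
    have cA: "card_le ?A x \<le> count_le ?NA x + 1" and cB: "card_le ?B x \<le> count_le ?NB x + 1"
      using parking_on_card_le[OF A] parking_on_card_le[OF B] by auto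
    have cA': "card_le ?A x \<le> count_le ?NA x" if "x < q"
      using parking_on_card_le_below[OF A] MaxA that by simp
    have cB': "card_le ?B x \<le> count_le ?NB x" if "x < Max ?B"
      using parking_on_card_le_below[OF B] that by simp
    have "Max C \<in> ?A \<or> Max C \<in> ?B" using fin pB Max_in by blast
    then have "\<not> (q \<le> x \<and> Max ?B \<le> x)" using x MaxA finA finB by (metis Max_ge le_trans not_le)
    moreover have "p \<le> Max ?B" using finB pB by simp
    moreover note split = card_le_Int_Diff[OF fin, of x "{p<..q}"] count_le_filter_split[of N x "{p<..q}"]
    ultimately consider "x < q" "x < Max ?B" | "q \<le> x" "x < Max ?B" "p \<le> x" | "x < q" "p \<le> x"
      using assms(3) by fastforce
    then show ?thesis
    proof cases
      case 1
      then show ?thesis using cA' cB' split by simp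
    next
      case 2
      then show ?thesis using cA cB' split by simp
    next
      case 3
      then show ?thesis using cA' cB split by simp
    qed
  qed
  then show ?thesis unfolding parking_on_def using fin NC size \<open>p \<in> C\<close> by auto
qed

lemma card_le_Diff_arc_beyond:
  assumes park: "parking_on C (add_mset p N)" and "q \<in> C" "p < q"
    and arc: "card (C \<inter> {p<..q}) = size {#z \<in># N. z \<in> {p<..q}#} + 1"
    and "q \<le> y" "y < Max C"
  shows "card_le (C - {p<..q}) y \<le> count_le {#z \<in># N. z \<notin> {p<..q}#} y"
proof -
  let ?A = "C \<inter> {p<..q}" and ?NA = "{#z \<in># N. z \<in> {p<..q}#}"
  have fin: "finite C" and NC: "set_mset N \<subseteq> C" using park unfolding parking_on_def by auto
  then have finA: "finite ?A" and NA: "set_mset ?NA \<subseteq> ?A" by auto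
  have "Max ?A = q" using assms(2,3) finA by (intro Max_eqI) auto
  then have "card_le ?A y = card ?A" "count_le ?NA y = size ?NA"
    using card_le_ge_Max[OF finA] count_le_ge_Max[OF finA NA] \<open>q \<le> y\<close> by simp_all
  \<comment> \<open>the arc holds one label more than entries, which the entry \<open>p\<close> makes up for\<close>
  then show ?thesis using parking_on_card_le_below[OF park \<open>y < Max C\<close>] \<open>q \<le> y\<close> \<open>p < q\<close> arc
      card_le_Int_Diff[OF fin, of y "{p<..q}"] count_le_filter_split[of N y "{p<..q}"]
    by simp
qed

lemma parking_on_Diff_arc:
  assumes park: "parking_on C (add_mset p N)" and "q \<in> C" "p < q"
    and A: "parking_on (C \<inter> {p<..q}) {#z \<in># N. z \<in> {p<..q}#}"
  shows "parking_on (C - {p<..q}) {#z \<in># N. z \<notin> {p<..q}#}"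
proof -
  let ?A = "C \<inter> {p<..q}" and ?B = "C - {p<..q}"
  let ?NA = "{#z \<in># N. z \<in> {p<..q}#}" and ?NB = "{#z \<in># N. z \<notin> {p<..q}#}"
  have fin: "finite C" and size: "size N + 2 = card C" and pC: "p \<in> C" and NC: "set_mset N \<subseteq> C"
    using park unfolding parking_on_def by auto
  have sizeA: "size ?NA + 1 = card ?A" using A unfolding parking_on_def by simp
  have sizeB: "size ?NB + 1 = card ?B"
    using size sizeA size_filter_mset_split[of N "\<lambda>z. z \<in> {p<..q}"] card_Int_Diff[OF fin, of "{p<..q}"]
    by simp
  note beyond_q = card_le_Diff_arc_beyond[OF park assms(2,3) sizeA[symmetric]]
  have "card_le ?B x \<le> count_le ?NB x" if x: "x < Max ?B" for x
  proof -
    have MaxB: "Max ?B \<le> Max C" using fin pC by (intro Max_mono) auto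
    consider "x < p" | "p \<le> x" "x < q" | "q \<le> x" by linarith
    then show ?thesis
    proof cases
      case 1
      have "card_le ?A x = 0" "count_le ?NA x = 0"
        using 1 unfolding card_le_def count_le_def by (auto simp: filter_filter_mset)
      then show ?thesis using parking_on_card_le_below[OF park, of x] x MaxB 1
          card_le_Int_Diff[OF fin, of x "{p<..q}"] count_le_filter_split[of N x "{p<..q}"]
        by simp
    next
      case 2
      have "Max ?B \<in> ?B" using fin pC by (intro Max_in) auto
      then have "q < Max ?B" using x 2 by auto
      moreover have "card_le ?B x = card_le ?B q"
        using 2 unfolding card_le_def by (auto intro!: arg_cong[where f = card])
      moreover have "count_le ?NB x = count_le ?NB q"
        using 2 unfolding count_le_def
        by (auto simp: filter_filter_mset intro!: arg_cong[where f = size] filter_mset_cong)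
      ultimately show ?thesis using beyond_q[of q] MaxB by simp
    next
      case 3
      then show ?thesis using beyond_q x MaxB by simp
    qed
  qed
  then show ?thesis unfolding parking_on_def using fin pC sizeB NC by auto
qed

lemma parking_on_split_iff:
  assumes "p \<in> C" "q \<in> C" "p < q"
  shows "parking_on (C \<inter> {p<..q}) {#z \<in># N. z \<in> {p<..q}#} \<and>
      parking_on (C - {p<..q}) {#z \<in># N. z \<notin> {p<..q}#} \<longleftrightarrow>
    parking_on C (add_mset p N) \<and> parking_on (C \<inter> {p<..q}) {#z \<in># N. z \<in> {p<..q}#}"
  using parking_on_add_msetI parking_on_Diff_arc assms by blast

lemma parking_on_arc_iff_counts:
  assumes "finite C" "q \<in> C" "p < q" "set_mset N \<subseteq> C"
  shows "parking_on (C \<inter> {p<..q}) {#z \<in># N. z \<in> {p<..q}#} \<longleftrightarrow>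
    card (C \<inter> {p<..q}) = size {#z \<in># N. z \<in> {p<..q}#} + 1 \<and>
    (\<forall>x<q. card (C \<inter> {p<..x}) \<le> size {#z \<in># N. z \<in> {p<..x}#})"
proof -
  have "Max (C \<inter> {p<..q}) = q" using assms by (intro Max_eqI) auto
  moreover have "card_le (C \<inter> {p<..q}) x = card (C \<inter> {p<..x})" if "x < q" for x
    unfolding card_le_def using that by (auto intro!: arg_cong[where f = card])
  moreover have "count_le {#z \<in># N. z \<in> {p<..q}#} x = size {#z \<in># N. z \<in> {p<..x}#}" if "x < q" for x
    unfolding count_le_def using that
    by (auto simp: filter_filter_mset intro!: arg_cong[where f = size] filter_mset_cong)
  ultimately show ?thesis unfolding parking_on_def using assms by auto
qed

lemma parking_on_arc_unique:
  assumes fin: "finite C" and NC: "set_mset N \<subseteq> C"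
    and "q \<in> C" "p < q" "parking_on (C \<inter> {p<..q}) {#z \<in># N. z \<in> {p<..q}#}"
    and "q' \<in> C" "p < q'" "parking_on (C \<inter> {p<..q'}) {#z \<in># N. z \<in> {p<..q'}#}"
  shows "q = q'"
proof -
  have "\<not> q1 < q2" if "q1 \<in> C" "p < q1" "parking_on (C \<inter> {p<..q1}) {#z \<in># N. z \<in> {p<..q1}#}"
    and "q2 \<in> C" "p < q2" "parking_on (C \<inter> {p<..q2}) {#z \<in># N. z \<in> {p<..q2}#}" for q1 q2
    using parking_on_arc_iff_counts[OF fin that(1,2) NC] parking_on_arc_iff_counts[OF fin that(4,5) NC] that(3,6)
    by fastforce
  then show ?thesis using assms by (meson linorder_neqE_nat)
qed

lemma parking_on_Max_deficit:
  assumes park: "parking_on C (add_mset p N)"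
  shows "size {#z \<in># N. z \<in> {p<..Max C}#} < card (C \<inter> {p<..Max C})"
proof -
  have fin: "finite C" and size: "size N + 2 = card C" and NC: "set_mset N \<subseteq> C"
    using park unfolding parking_on_def by auto
  have pMax: "p < Max C" using parking_on_less_Max[OF park] by simp
  have "C \<inter> {..p} = {z \<in> C. z \<le> p}" "C - {..p} = C \<inter> {p<..Max C}" using fin by (auto dest: Max_ge)
  then have "card C = card_le C p + card (C \<inter> {p<..Max C})"
    unfolding card_le_def using card_Int_Diff[OF fin] by metis
  moreover have "{#z \<in># N. \<not> z \<le> p#} = {#z \<in># N. z \<in> {p<..Max C}#}"
    using fin NC by (auto intro!: filter_mset_cong dest: Max_ge)
  then have "size N = count_le N p + size {#z \<in># N. z \<in> {p<..Max C}#}"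
    unfolding count_le_def by (metis size_filter_mset_split)
  ultimately show ?thesis using parking_on_card_le_below[OF park pMax] size by simp
qed

lemma parking_on_arc_exists:
  assumes park: "parking_on C (add_mset p N)"
  shows "\<exists>q\<in>C. p < q \<and> parking_on (C \<inter> {p<..q}) {#z \<in># N. z \<in> {p<..q}#}"
proof -
  have fin: "finite C" and NC: "set_mset N \<subseteq> C" using park unfolding parking_on_def by auto
  define D where "D x = card (C \<inter> {p<..x})" for x
  define cnt where "cnt x = size {#z \<in># N. z \<in> {p<..x}#}" for x
  \<comment> \<open>the first point where the arc beyond \<open>p\<close> holds more labels than entries\<close>
  define q where "q = (LEAST x. cnt x < D x)"
  have q: "cnt q < D q"
    using parking_on_Max_deficit[OF park] unfolding q_def D_def cnt_def by (rule LeastI)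
  have before_q: "D x \<le> cnt x" if "x < q" for x using not_less_Least[OF that[unfolded q_def]] by simp
  have "p < q"
  proof (rule ccontr)
    assume "\<not> p < q"
    then have "D q = 0" unfolding D_def by (simp add: Int_absorb2)
    then show False using q by simp
  qed
  have cnt_mono: "cnt (q - 1) \<le> cnt q"
    unfolding cnt_def by (intro size_mset_mono filter_mset_mono_strong) auto
  have arc_q: "C \<inter> {p<..q} \<subseteq> insert q (C \<inter> {p<..q - 1})" by auto
  have "D q \<le> card (insert q (C \<inter> {p<..q - 1}))"
    unfolding D_def by (rule card_mono) (use fin arc_q in auto)
  also have "\<dots> \<le> D (q - 1) + 1" unfolding D_def by (simp add: card_insert_if fin)
  finally have "D q \<le> D (q - 1) + 1" .
  then have Dq: "D q = cnt q + 1" using q before_q[of "q - 1"] cnt_mono \<open>p < q\<close> by linarith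
  have "q \<in> C"
  proof (rule ccontr)
    assume "q \<notin> C"
    then have "D q = D (q - 1)" unfolding D_def using arc_q by (auto intro!: arg_cong[where f = card])
    then show False using Dq before_q[of "q - 1"] cnt_mono \<open>p < q\<close> by linarith
  qed
  then show ?thesis
    using \<open>p < q\<close> Dq before_q parking_on_arc_iff_counts[OF fin \<open>q \<in> C\<close> \<open>p < q\<close> NC]
    unfolding D_def cnt_def by auto
qed

section \<open>Cyclically sorted label lists\<close>

definition cyclically_sorted :: "nat list \<Rightarrow> bool" where
  "cyclically_sorted l \<longleftrightarrow> (\<exists>w k. sorted_wrt (<) w \<and> l = rotate k w)"

definition cyclic_succ :: "nat set \<Rightarrow> nat \<Rightarrow> nat" where
  "cyclic_succ C x = (if \<exists>z\<in>C. x < z then Min {z \<in> C. x < z} else Min C)"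

lemma ex_rotate_inverse: "\<exists>j. rotate j (rotate k xs) = xs"
proof (cases "xs = []")
  case False
  let ?j = "length xs - k mod length xs"
  have "k mod length xs < length xs" using False by simp
  then have "?j + k = k div length xs * length xs + length xs"
    using div_mult_mod_eq[of k "length xs"] by linarith
  then have "(?j + k) mod length xs = 0" by simp
  then have "rotate ?j (rotate k xs) = rotate 0 xs" by (metis rotate_rotate rotate_conv_mod)
  then have "rotate ?j (rotate k xs) = xs" by simp
  then show ?thesis ..
qed simp

lemma cyclically_sorted_rotate: "cyclically_sorted l \<Longrightarrow> cyclically_sorted (rotate n l)"
  unfolding cyclically_sorted_def by (metis rotate_rotate)

lemma rotate_eq_append_split:
  assumes "rotate k w = s @ t"
  shows "\<exists>a m b. w = a @ m @ b \<and> (s = m \<and> t = b @ a \<or> s = b @ a \<and> t = m)"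
proof -
  define j where "j = k mod length w"
  have "s @ t = drop j w @ take j w" using assms rotate_drop_take[of k w] j_def by simp
  then obtain us where "s = drop j w @ us \<and> us @ t = take j w \<or> s @ us = drop j w \<and> t = us @ take j w"
    by (auto simp: append_eq_append_conv2)
  then show ?thesis
  proof
    assume h: "s = drop j w @ us \<and> us @ t = take j w"
    then have "w = us @ t @ drop j w" by (metis append.assoc append_take_drop_id)
    then show ?thesis using h by blast
  next
    assume h: "s @ us = drop j w \<and> t = us @ take j w"
    then have "w = take j w @ s @ us" by (metis append_take_drop_id)
    then show ?thesis using h by blast
  qed
qed

lemma cyclically_sorted_appendD:
  assumes "cyclically_sorted (s @ t)"
  shows "cyclically_sorted s \<and> cyclically_sorted t"
proof -
  obtain w k where w: "sorted_wrt (<) w" and rot: "rotate k w = s @ t"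
    using assms unfolding cyclically_sorted_def by metis
  obtain a m b where "w = a @ m @ b" and st: "s = m \<and> t = b @ a \<or> s = b @ a \<and> t = m"
    using rotate_eq_append_split[OF rot] by blast
  then have "sorted_wrt (<) m" "sorted_wrt (<) (a @ b)" using w by (auto simp: sorted_wrt_append)
  have "cyclically_sorted m"
    unfolding cyclically_sorted_def using \<open>sorted_wrt (<) m\<close> by (intro exI[of _ m] exI[of _ 0]) simp
  moreover have "cyclically_sorted (b @ a)" unfolding cyclically_sorted_def using \<open>sorted_wrt (<) (a @ b)\<close>
    by (intro exI[of _ "a @ b"] exI[of _ "length a"]) (simp add: rotate_append)
  ultimately show ?thesis using st by blast
qed

lemma sorted_wrt_less_le_last:
  fixes xs :: "'a::linorder list"
  shows "sorted_wrt (<) xs \<Longrightarrow> z \<in> set xs \<Longrightarrow> z \<le> last xs"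
  by (induction xs) (auto simp: less_imp_le)

lemma sorted_wrt_less_hd_le:
  fixes xs :: "'a::linorder list"
  shows "sorted_wrt (<) xs \<Longrightarrow> z \<in> set xs \<Longrightarrow> hd xs \<le> z"
  by (cases xs) (auto simp: less_imp_le)

lemma Min_set_sorted_wrt_less: "sorted_wrt (<) xs \<Longrightarrow> xs \<noteq> [] \<Longrightarrow> Min (set xs) = hd xs"
  by (intro Min_eqI) (auto simp: sorted_wrt_less_hd_le)

lemma cyclic_succ_last_append:
  assumes "sorted_wrt (<) (x @ y)" "x \<noteq> []" "y \<noteq> []"
  shows "cyclic_succ (set (x @ y)) (last x) = hd y"
proof -
  have lx: "last x \<in> set x" using assms(2) by simp
  have sx: "sorted_wrt (<) x" and xy: "\<And>a b. a \<in> set x \<Longrightarrow> b \<in> set y \<Longrightarrow> a < b"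
    using assms(1) by (auto simp: sorted_wrt_append)
  have succs: "{z \<in> set (x @ y). last x < z} = set y"
  proof (intro set_eqI iffI)
    fix z assume "z \<in> {z \<in> set (x @ y). last x < z}"
    then have "z \<in> set x \<or> z \<in> set y" "last x < z" by auto
    then show "z \<in> set y" using sorted_wrt_less_le_last[OF sx, of z] by (meson leD)
  next
    fix z assume "z \<in> set y"
    then show "z \<in> {z \<in> set (x @ y). last x < z}" using xy[OF lx] by auto
  qed
  have "\<exists>z\<in>set (x @ y). last x < z" using xy[OF lx, of "hd y"] assms(3) by auto
  then have "cyclic_succ (set (x @ y)) (last x) = Min (set y)"
    unfolding cyclic_succ_def succs by (simp only: if_True)
  then show ?thesis using assms by (simp add: Min_set_sorted_wrt_less sorted_wrt_append)
qed

lemma cyclic_succ_last: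
  assumes "sorted_wrt (<) w" "w \<noteq> []"
  shows "cyclic_succ (set w) (last w) = hd w"
proof -
  have "\<not> (\<exists>z\<in>set w. last w < z)" using sorted_wrt_less_le_last[OF assms(1)] by (blast dest: leD)
  then show ?thesis unfolding cyclic_succ_def using assms by (simp add: Min_set_sorted_wrt_less)
qed

lemma sorted_wrt_less_middle:
  fixes x y z :: "'a::linorder list"
  assumes sorted: "sorted_wrt (<) (x @ y @ z)" and "x \<noteq> []" "y \<noteq> []"
  shows "set y = set (x @ y @ z) \<inter> {last x<..last y}"
proof -
  have sx: "sorted_wrt (<) x" and sy: "sorted_wrt (<) y"
    and xy: "\<And>a b. a \<in> set x \<Longrightarrow> b \<in> set y \<Longrightarrow> a < b"
    and yz: "\<And>a b. a \<in> set y \<Longrightarrow> b \<in> set z \<Longrightarrow> a < b"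
    using sorted by (auto simp: sorted_wrt_append)
  have lx: "last x \<in> set x" and ly: "last y \<in> set y" using assms by auto
  have not_x: "\<not> last x < u" if "u \<in> set x" for u using sorted_wrt_less_le_last[OF sx that] by simp
  have not_z: "\<not> u \<le> last y" if "u \<in> set z" for u using yz[OF ly that] by simp
  show ?thesis
  proof (intro set_eqI iffI)
    fix u assume "u \<in> set y"
    then show "u \<in> set (x @ y @ z) \<inter> {last x<..last y}"
      using xy[OF lx] sorted_wrt_less_le_last[OF sy] by simp
  next
    fix u assume "u \<in> set (x @ y @ z) \<inter> {last x<..last y}"
    then have "u \<in> set x \<or> u \<in> set y \<or> u \<in> set z" "last x < u" "u \<le> last y" by auto
    then show "u \<in> set y" using not_x not_z by blast
  qed
qed

lemma sorted_wrt_arc_split: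
  assumes sorted: "sorted_wrt (<) (a @ m @ b)" and "a \<noteq> []" "m \<noteq> []"
  defines "W \<equiv> set (a @ m @ b)"
  shows "last a < last m \<and> set m = W \<inter> {last a<..last m} \<and> set (b @ a) = W - {last a<..last m} \<and>
    hd m = cyclic_succ W (last a) \<and> hd (b @ a) = cyclic_succ W (last m)"
proof -
  have "last a < last m" using sorted assms(2,3) by (simp add: sorted_wrt_append)
  moreover have m: "set m = W \<inter> {last a<..last m}"
    unfolding W_def by (rule sorted_wrt_less_middle[OF sorted assms(2,3)])
  moreover have "set (b @ a) = W - {last a<..last m}"
  proof -
    have "distinct (a @ m @ b)" using sorted by (simp add: strict_sorted_iff)
    then have "set m \<inter> set (b @ a) = {}" by auto
    moreover have "W = set m \<union> set (b @ a)" unfolding W_def by auto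
    ultimately show ?thesis using m by blast
  qed
  moreover have "hd m = cyclic_succ W (last a)"
    using cyclic_succ_last_append[of a "m @ b"] sorted assms(2,3) unfolding W_def by simp
  moreover have "hd (b @ a) = cyclic_succ W (last m)"
  proof (cases "b = []")
    case True
    then show ?thesis using cyclic_succ_last[of "a @ m"] sorted assms(2,3) unfolding W_def by simp
  next
    case False
    then show ?thesis using cyclic_succ_last_append[of "a @ m" b] sorted assms(3) unfolding W_def by simp
  qed
  ultimately show ?thesis by (intro conjI)
qed

lemma cyclically_sorted_arcs_ordered:
  assumes "cyclically_sorted (s @ t)" "s \<noteq> []" "t \<noteq> []"
  defines "W \<equiv> set (s @ t)"
  shows "\<exists>u v. (s = u \<and> t = v \<or> s = v \<and> t = u) \<and> last v < last u \<and>
    set u = W \<inter> {last v<..last u} \<and> set v = W - {last v<..last u} \<and>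
    hd u = cyclic_succ W (last v) \<and> hd v = cyclic_succ W (last u)"
proof -
  obtain w k where w: "sorted_wrt (<) w" and rot: "rotate k w = s @ t"
    using assms(1) unfolding cyclically_sorted_def by metis
  obtain a m b where amb: "w = a @ m @ b" and st: "s = m \<and> t = b @ a \<or> s = b @ a \<and> t = m"
    using rotate_eq_append_split[OF rot] by blast
  have W_amb: "W = set (a @ m @ b)" unfolding W_def using rot amb by (metis set_rotate)
  show ?thesis
  proof (cases "a = []")
    case False
    moreover have "m \<noteq> []" using st assms(2,3) by auto
    ultimately have "last a < last m \<and> set m = W \<inter> {last a<..last m} \<and>
        set (b @ a) = W - {last a<..last m} \<and>
        hd m = cyclic_succ W (last a) \<and> hd (b @ a) = cyclic_succ W (last m)"
      using sorted_wrt_arc_split[of a m b] w unfolding amb W_amb by blast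
    moreover have "last (b @ a) = last a" using False by simp
    ultimately show ?thesis using st by metis
  next
    case True
    then have "m \<noteq> []" "b \<noteq> []" using st assms(2,3) by auto
    then have "last m < last b \<and> set b = W \<inter> {last m<..last b} \<and>
        set ([] @ m) = W - {last m<..last b} \<and>
        hd b = cyclic_succ W (last m) \<and> hd ([] @ m) = cyclic_succ W (last b)"
      using sorted_wrt_arc_split[of m b "[]"] w True unfolding amb W_amb by simp
    then show ?thesis using st True by (metis append_Nil append_Nil2)
  qed
qed

lemma cyclically_sorted_arc_split:
  assumes "cyclically_sorted (s @ t)" "s \<noteq> []" "t \<noteq> []"
  defines "P \<equiv> min (last s) (last t)" and "Q \<equiv> max (last s) (last t)"
  shows "P < Q \<and>
    {set s, set t} = {set (s @ t) \<inter> {P<..Q}, set (s @ t) - {P<..Q}} \<and>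
    {hd s, hd t} = {cyclic_succ (set (s @ t)) P, cyclic_succ (set (s @ t)) Q}"
proof -
  define W where "W = set (s @ t)"
  obtain u v where uv: "s = u \<and> t = v \<or> s = v \<and> t = u" and arc: "last v < last u"
    "set u = W \<inter> {last v<..last u}" "set v = W - {last v<..last u}"
    "hd u = cyclic_succ W (last v)" "hd v = cyclic_succ W (last u)"
    using cyclically_sorted_arcs_ordered[OF assms(1-3), folded W_def] by blast
  from uv consider "s = u" "t = v" | "s = v" "t = u" by blast
  then show ?thesis
  proof cases
    case 1
    then show ?thesis unfolding P_def Q_def W_def[symmetric] using arc by simp
  next
    case 2
    then show ?thesis unfolding P_def Q_def W_def[symmetric] using arc by (simp add: insert_commute)
  qed
qed

section \<open>Positions and moves\<close>

definition labels :: "arm list \<Rightarrow> nat set" where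
  "labels R = short ` set R"

definition valid_position :: "arm list list \<Rightarrow> bool" where
  "valid_position S \<longleftrightarrow> distinct (map short (concat S)) \<and>
     (\<forall>R\<in>set S. R \<noteq> [] \<and> cyclically_sorted (map short R))"

lemma valid_position_distinct_region:
  "valid_position S \<Longrightarrow> R \<in> set S \<Longrightarrow> distinct (map short R)"
  unfolding valid_position_def by (induction S) auto

lemma valid_position_labels_disjoint:
  assumes "valid_position (S1 @ R # S2)" "R' \<in> set S1 \<union> set S2"
  shows "labels R' \<inter> labels R = {}"
proof -
  have "distinct (map short (concat S1) @ map short R @ map short (concat S2))"
    using assms(1) unfolding valid_position_def by simp
  then have "set (map short (concat S1)) \<inter> set (map short R) = {}"
      "set (map short R) \<inter> set (map short (concat S2)) = {}"
    unfolding distinct_append set_append by blast+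
  moreover have "labels R' \<subseteq> set (map short (concat S1)) \<or> labels R' \<subseteq> set (map short (concat S2))"
    using assms(2) unfolding labels_def by auto
  moreover have "labels R = set (map short R)" unfolding labels_def by simp
  ultimately show ?thesis by blast
qed

lemma valid_position_region_eq:
  assumes "valid_position S" "R \<in> set S" "R' \<in> set S" "z \<in> labels R" "z \<in> labels R'"
  shows "R = R'"
proof (rule ccontr)
  assume "R \<noteq> R'"
  obtain S1 S2 where S: "S = S1 @ R # S2" using assms(2) by (metis split_list)
  then have "R' \<in> set S1 \<union> set S2" using assms(3) \<open>R \<noteq> R'\<close> by auto
  then show False using valid_position_labels_disjoint[of S1 R S2 R'] assms S by blast
qed

lemma mset_rotate [simp]: "mset (rotate n xs) = mset xs"
  by (metis append_take_drop_id mset_append rotate_drop_take union_commute)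

lemma move_arc_split:
  assumes "cyclically_sorted (map short R)" and rot: "rotate k R = \<alpha> # xs @ \<beta> # ys"
  defines "P \<equiv> min (short (last (\<beta> # ys))) (short (last (\<alpha> # xs)))"
    and "Q \<equiv> max (short (last (\<beta> # ys))) (short (last (\<alpha> # xs)))"
  shows "P < Q \<and> P \<in> labels R \<and> Q \<in> labels R \<and>
    {labels (xs @ [New \<alpha> \<beta>]), labels (ys @ [New \<beta> \<alpha>])} = {labels R \<inter> {P<..Q}, labels R - {P<..Q}} \<and>
    {short \<alpha>, short \<beta>} = {cyclic_succ (labels R) P, cyclic_succ (labels R) Q}"
proof -
  let ?s = "map short (\<alpha> # xs)" and ?t = "map short (\<beta> # ys)"
  have st: "?s @ ?t = rotate k (map short R)" using rot by (simp add: rotate_map)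
  have W: "set (?s @ ?t) = labels R" unfolding st labels_def by simp
  have last: "last ?s = short (last (\<alpha> # xs))" "last ?t = short (last (\<beta> # ys))"
    by (simp_all add: last_map del: list.map)
  have "cyclically_sorted (?s @ ?t)" unfolding st using assms(1) by (rule cyclically_sorted_rotate)
  from cyclically_sorted_arc_split[OF this] have arcs: "P < Q \<and>
      {set ?s, set ?t} = {labels R \<inter> {P<..Q}, labels R - {P<..Q}} \<and>
      {short \<alpha>, short \<beta>} = {cyclic_succ (labels R) P, cyclic_succ (labels R) Q}"
    unfolding W last P_def Q_def by (simp add: min.commute max.commute)
  moreover have "labels (xs @ [New \<alpha> \<beta>]) = set ?s" "labels (ys @ [New \<beta> \<alpha>]) = set ?t"
    unfolding labels_def by auto
  moreover have "{P, Q} \<subseteq> labels R"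
    using last_in_set[of ?s] last_in_set[of ?t] unfolding W[symmetric] last P_def Q_def
    by (auto simp: min_def max_def)
  ultimately show ?thesis by simp
qed

lemma valid_position_move:
  assumes valid: "valid_position (S1 @ R # S2)" and rot: "rotate k R = \<alpha> # xs @ \<beta> # ys"
  shows "valid_position (S1 @ (xs @ [New \<alpha> \<beta>]) # (ys @ [New \<beta> \<alpha>]) # S2)"
proof -
  have "mset (map short (xs @ [New \<alpha> \<beta>] @ ys @ [New \<beta> \<alpha>])) = mset (map short (rotate k R))"
    unfolding rot by simp
  then have "mset (map short (concat (S1 @ (xs @ [New \<alpha> \<beta>]) # (ys @ [New \<beta> \<alpha>]) # S2)))
      = mset (map short (concat (S1 @ R # S2)))"
    by simp
  then have dist: "distinct (map short (concat (S1 @ (xs @ [New \<alpha> \<beta>]) # (ys @ [New \<beta> \<alpha>]) # S2)))"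
    using valid unfolding valid_position_def by (metis mset_eq_imp_distinct_iff)
  have "cyclically_sorted (rotate k (map short R))"
    using valid unfolding valid_position_def by (intro cyclically_sorted_rotate) simp
  then have "cyclically_sorted (map short (rotate k R))" by (simp only: rotate_map)
  then have "cyclically_sorted (map short (\<alpha> # xs)) \<and> cyclically_sorted (map short (\<beta> # ys))"
    unfolding rot by (intro cyclically_sorted_appendD) simp
  then have "cyclically_sorted (rotate 1 (map short (\<alpha> # xs)))" "cyclically_sorted (rotate 1 (map short (\<beta> # ys)))"
    using cyclically_sorted_rotate by blast+
  then show ?thesis using valid dist unfolding valid_position_def by simp
qed

lemma move_exists:
  assumes "cyclically_sorted (map short R)" "p \<in> labels R" "q \<in> labels R" "p < q"
  shows "\<exists>k \<alpha> xs \<beta> ys. rotate k R = \<alpha> # xs @ \<beta> # ys \<and>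
    short (last (\<beta> # ys)) = p \<and> short (last (\<alpha> # xs)) = q"
proof -
  obtain w k0 where sorted: "sorted_wrt (<) w" and w: "map short R = rotate k0 w"
    using assms(1) unfolding cyclically_sorted_def by blast
  obtain j where j: "rotate j (map short R) = w" using ex_rotate_inverse w by metis
  have "set w = labels R" using w unfolding labels_def by (metis set_map set_rotate)
  then have "p \<in> set w" "q \<in> set w" using assms(2,3) by auto
  then obtain u v where u: "w = u @ p # v" by (metis split_list)
  have "q \<notin> set u" using sorted \<open>p < q\<close> unfolding u by (auto simp: sorted_wrt_append)
  then have "q \<in> set v" using \<open>q \<in> set w\<close> \<open>p < q\<close> unfolding u by auto
  then obtain v1 v2 where v: "v = v1 @ q # v2" by (metis split_list)
  have "map short (rotate (length (u @ [p]) + j) R) = rotate (length (u @ [p])) (rotate j (map short R))"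
    by (simp only: rotate_map rotate_rotate)
  also have "\<dots> = rotate (length (u @ [p])) ((u @ [p]) @ v1 @ q # v2)" unfolding j u v by simp
  also have "\<dots> = (v1 @ [q]) @ (v2 @ u @ [p])" by (simp only: rotate_append) simp
  finally have "map short (rotate (length (u @ [p]) + j) R) = (v1 @ [q]) @ (v2 @ u @ [p])" .
  then have "\<exists>X Y. rotate (length (u @ [p]) + j) R = X @ Y \<and>
      v1 @ [q] = map short X \<and> v2 @ u @ [p] = map short Y"
    by (simp only: map_eq_append_conv)
  then obtain X Y where XY: "rotate (length (u @ [p]) + j) R = X @ Y"
    and X: "map short X = v1 @ [q]" and Y: "map short Y = v2 @ u @ [p]"
    by metis
  obtain \<alpha> xs where \<alpha>: "X = \<alpha> # xs" using X by (cases X) auto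
  obtain \<beta> ys where \<beta>: "Y = \<beta> # ys" using Y by (cases Y) auto
  have "short (last (\<alpha> # xs)) = q"
    unfolding \<alpha>[symmetric] using last_map[of X short] X \<open>X = \<alpha> # xs\<close> by (simp del: last.simps)
  moreover have "short (last (\<beta> # ys)) = p"
    unfolding \<beta>[symmetric] using last_map[of Y short] Y \<open>Y = \<beta> # ys\<close> by (simp del: last.simps)
  moreover have "rotate (length (u @ [p]) + j) R = \<alpha> # xs @ \<beta> # ys" using XY unfolding \<alpha> \<beta> by simp
  ultimately show ?thesis by blast
qed

lemma rotate_eq_Cons_unique:
  assumes "distinct xs" "rotate k xs = a # u" "rotate k' xs = a # u'"
  shows "u = u'"
proof -
  have "xs \<noteq> []" using assms(2) by auto
  then have "xs ! (k mod length xs) = xs ! (k' mod length xs)"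
    using assms(2,3) hd_rotate_conv_nth[of xs] by (metis list.sel(1))
  then have "k mod length xs = k' mod length xs"
    using assms(1) \<open>xs \<noteq> []\<close> by (simp add: nth_eq_iff_index_eq)
  then have "rotate k xs = rotate k' xs" by (metis rotate_conv_mod)
  then show ?thesis using assms(2,3) by simp
qed

lemma move_determined_by_arms:
  assumes "distinct R" "rotate k R = \<alpha> # xs @ \<beta> # ys" "rotate k' R = \<alpha>' # xs' @ \<beta>' # ys'"
    and "{\<alpha>', \<beta>'} = {\<alpha>, \<beta>}"
  shows "{#xs' @ [New \<alpha>' \<beta>'], ys' @ [New \<beta>' \<alpha>']#} = {#xs @ [New \<alpha> \<beta>], ys @ [New \<beta> \<alpha>]#}"
proof -
  have dist: "distinct (\<alpha> # xs @ \<beta> # ys)" "distinct (\<alpha>' # xs' @ \<beta>' # ys')"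
    using assms(1-3) by (metis distinct_rotate)+
  have swap: "rotate (length (\<alpha> # xs) + k) R = \<beta> # ys @ \<alpha> # xs"
    using rotate_append[of "\<alpha> # xs" "\<beta> # ys"] assms(2) by (simp add: rotate_rotate[symmetric])
  have "\<alpha>' = \<alpha> \<and> \<beta>' = \<beta> \<or> \<alpha>' = \<beta> \<and> \<beta>' = \<alpha>" using assms(4) dist by (auto simp: doubleton_eq_iff)
  then show ?thesis
  proof
    assume "\<alpha>' = \<alpha> \<and> \<beta>' = \<beta>"
    then have "rotate k' R = \<alpha> # xs' @ \<beta> # ys'" using assms(3) by simp
    then have "xs' @ \<beta> # ys' = xs @ \<beta> # ys" using rotate_eq_Cons_unique[OF assms(1) _ assms(2)] by blast
    moreover have "\<beta> \<notin> set xs'" "\<beta> \<notin> set ys'" using dist \<open>\<alpha>' = \<alpha> \<and> \<beta>' = \<beta>\<close> by auto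
    ultimately show ?thesis using \<open>\<alpha>' = \<alpha> \<and> \<beta>' = \<beta>\<close> by (simp add: append_Cons_eq_iff)
  next
    assume "\<alpha>' = \<beta> \<and> \<beta>' = \<alpha>"
    then have "rotate k' R = \<beta> # xs' @ \<alpha> # ys'" using assms(3) by simp
    then have "xs' @ \<alpha> # ys' = ys @ \<alpha> # xs" using rotate_eq_Cons_unique[OF assms(1) _ swap] by blast
    moreover have "\<alpha> \<notin> set xs'" "\<alpha> \<notin> set ys'" using dist \<open>\<alpha>' = \<beta> \<and> \<beta>' = \<alpha>\<close> by auto
    ultimately show ?thesis using \<open>\<alpha>' = \<beta> \<and> \<beta>' = \<alpha>\<close> by (simp add: append_Cons_eq_iff add_mset_commute)
  qed
qed

section \<open>Lines of play and parking sequences\<close>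

definition parking_sequence :: "nat set set \<Rightarrow> nat list \<Rightarrow> bool" where
  "parking_sequence \<C> as \<longleftrightarrow> (\<forall>C\<in>\<C>. parking_on C {#z \<in># mset as. z \<in> C#}) \<and> set as \<subseteq> \<Union>\<C>"

lemma parking_on_singleton: "parking_on {c} {#}"
proof -
  have "card_le {c} x = 0" if "x < c" for x
  proof -
    have "{z \<in> {c}. z \<le> x} = {}" using that by auto
    then show ?thesis unfolding card_le_def by (simp only: card.empty)
  qed
  then show ?thesis unfolding parking_on_def by simp
qed

lemma parking_sequence_split_iff:
  assumes "p \<in> C" "q \<in> C" "p < q" "p \<notin> \<Union>\<O>"
  shows "parking_sequence ({C \<inter> {p<..q}, C - {p<..q}} \<union> \<O>) as \<longleftrightarrow>
    parking_sequence (insert C \<O>) (p # as) \<and>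
    parking_on (C \<inter> {p<..q}) {#z \<in># mset as. z \<in> C \<inter> {p<..q}#}"
proof -
  let ?N = "{#z \<in># mset as. z \<in> C#}"
  have arc: "{#z \<in># ?N. z \<in> {p<..q}#} = {#z \<in># mset as. z \<in> C \<inter> {p<..q}#}"
    and rest: "{#z \<in># ?N. z \<notin> {p<..q}#} = {#z \<in># mset as. z \<in> C - {p<..q}#}"
    by (simp_all add: filter_filter_mset)
  have C: "{#z \<in># mset (p # as). z \<in> C#} = add_mset p ?N" using assms(1) by simp
  have other: "{#z \<in># mset (p # as). z \<in> C'#} = {#z \<in># mset as. z \<in> C'#}" if "C' \<in> \<O>" for C'
    using assms(4) that by auto
  have cover: "set as \<subseteq> \<Union>({C \<inter> {p<..q}, C - {p<..q}} \<union> \<O>) \<longleftrightarrow> set (p # as) \<subseteq> \<Union>(insert C \<O>)"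
    using assms(1) by auto
  show ?thesis
    unfolding parking_sequence_def cover
    using parking_on_split_iff[OF assms(1-3), of ?N] arc rest C other by auto
qed

lemma move_parking_sequence_iff:
  assumes valid: "valid_position (S1 @ R # S2)" and rot: "rotate k R = \<alpha> # xs @ \<beta> # ys"
  defines "P \<equiv> min (short (last (\<beta> # ys))) (short (last (\<alpha> # xs)))"
    and "Q \<equiv> max (short (last (\<beta> # ys))) (short (last (\<alpha> # xs)))"
  shows "parking_sequence (labels ` set (S1 @ (xs @ [New \<alpha> \<beta>]) # (ys @ [New \<beta> \<alpha>]) # S2)) as \<longleftrightarrow>
    parking_sequence (labels ` set (S1 @ R # S2)) (P # as) \<and>
    parking_on (labels R \<inter> {P<..Q}) {#z \<in># mset as. z \<in> labels R \<inter> {P<..Q}#}"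
proof -
  let ?O = "labels ` (set S1 \<union> set S2)"
  have "cyclically_sorted (map short R)" using valid unfolding valid_position_def by simp
  from move_arc_split[OF this rot] have arcs: "P < Q" "P \<in> labels R" "Q \<in> labels R"
    "{labels (xs @ [New \<alpha> \<beta>]), labels (ys @ [New \<beta> \<alpha>])} = {labels R \<inter> {P<..Q}, labels R - {P<..Q}}"
    unfolding P_def Q_def by auto
  have "P \<notin> labels R'" if "R' \<in> set S1 \<union> set S2" for R'
    using valid_position_labels_disjoint[OF valid that] arcs(2) by auto
  then have notin: "P \<notin> \<Union>?O" by auto
  have "labels ` set (S1 @ (xs @ [New \<alpha> \<beta>]) # (ys @ [New \<beta> \<alpha>]) # S2)
      = {labels (xs @ [New \<alpha> \<beta>]), labels (ys @ [New \<beta> \<alpha>])} \<union> ?O"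
    by auto
  then have new: "labels ` set (S1 @ (xs @ [New \<alpha> \<beta>]) # (ys @ [New \<beta> \<alpha>]) # S2)
      = {labels R \<inter> {P<..Q}, labels R - {P<..Q}} \<union> ?O"
    unfolding arcs(4) .
  have old: "labels ` set (S1 @ R # S2) = insert (labels R) ?O" by auto
  show ?thesis unfolding new old by (rule parking_sequence_split_iff[OF arcs(2,3,1) notin])
qed

lemma play_parking_sequence:
  "play S ms as \<Longrightarrow> valid_position S \<Longrightarrow> parking_sequence (labels ` set S) as"
proof (induction rule: play.induct)
  case (stop S)
  have "parking_on (labels R) {#}" if R: "R \<in> set S" for R
  proof -
    obtain x where "R = [x]" using stop R unfolding valid_position_def by (cases R) auto
    then show ?thesis by (simp add: labels_def parking_on_singleton)
  qed
  then show ?case unfolding parking_sequence_def by simp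
next
  case (step S S1 R S2 k \<alpha> xs \<beta> ys ms as)
  then have valid: "valid_position (S1 @ R # S2)" by simp
  show ?case
    using step.IH[OF valid_position_move[OF valid step.hyps(2)]]
      move_parking_sequence_iff[OF valid step.hyps(2)] step.hyps(1)
    by simp
qed

lemma parking_sequence_play:
  "valid_position S \<Longrightarrow> parking_sequence (labels ` set S) as \<Longrightarrow> \<exists>ms. play S ms as"
proof (induction as arbitrary: S)
  case Nil
  have "length R \<le> 1" if "R \<in> set S" for R
  proof -
    have "parking_on (labels R) {#}" using Nil.prems(2) that unfolding parking_sequence_def by simp
    then have "card (labels R) = 1" unfolding parking_on_def by simp
    moreover have "distinct (map short R)" using valid_position_distinct_region[OF Nil.prems(1) that] .
    then have "card (labels R) = length R" unfolding labels_def by (metis distinct_card length_map set_map)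
    ultimately show ?thesis by simp
  qed
  then show ?case using play.stop by blast
next
  case (Cons p as)
  obtain R where R: "R \<in> set S" "p \<in> labels R" using Cons.prems(2) unfolding parking_sequence_def by auto
  obtain S1 S2 where S: "S = S1 @ R # S2" using R(1) by (metis split_list)
  have valid: "valid_position (S1 @ R # S2)" using Cons.prems(1) S by simp
  let ?N = "{#z \<in># mset as. z \<in> labels R#}"
  have "parking_on (labels R) (add_mset p ?N)"
    using Cons.prems(2) R unfolding parking_sequence_def by auto
  then obtain q where q: "q \<in> labels R" "p < q"
    and arc: "parking_on (labels R \<inter> {p<..q}) {#z \<in># ?N. z \<in> {p<..q}#}"
    using parking_on_arc_exists by blast
  obtain k \<alpha> xs \<beta> ys where rot: "rotate k R = \<alpha> # xs @ \<beta> # ys"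
    and ends: "short (last (\<beta> # ys)) = p" "short (last (\<alpha> # xs)) = q"
    using move_exists[of R p q] valid R(2) q unfolding valid_position_def by auto
  have "distinct (\<alpha> # xs @ \<beta> # ys)"
    using valid_position_distinct_region[OF valid] rot by (metis distinct_map distinct_rotate in_set_conv_decomp)
  then have "\<alpha> \<noteq> \<beta>" by simp
  have "parking_sequence (labels ` set (S1 @ (xs @ [New \<alpha> \<beta>]) # (ys @ [New \<beta> \<alpha>]) # S2)) as"
    using move_parking_sequence_iff[OF valid rot] ends q(2) arc Cons.prems(2) S
    by (simp add: filter_filter_mset)
  then obtain ms where "play (S1 @ (xs @ [New \<alpha> \<beta>]) # (ys @ [New \<beta> \<alpha>]) # S2) ms as"
    using Cons.IH valid_position_move[OF valid rot] by blast
  from play.step[OF S rot \<open>\<alpha> \<noteq> \<beta>\<close> this] show ?case using ends q(2) by auto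
qed

lemma move_determined_by_sequence:
  assumes valid: "valid_position (S1 @ R # S2)" "valid_position (S1' @ R' # S2')"
    and mset: "mset (S1' @ R' # S2') = mset (S1 @ R # S2)"
    and rot: "rotate k R = \<alpha> # xs @ \<beta> # ys" and rot': "rotate k' R' = \<alpha>' # xs' @ \<beta>' # ys'"
    and same_entry: "min (short (last (\<beta>' # ys'))) (short (last (\<alpha>' # xs')))
      = min (short (last (\<beta> # ys))) (short (last (\<alpha> # xs)))"
    and park: "parking_sequence (labels ` set (S1 @ (xs @ [New \<alpha> \<beta>]) # (ys @ [New \<beta> \<alpha>]) # S2)) as"
    and park': "parking_sequence (labels ` set (S1' @ (xs' @ [New \<alpha>' \<beta>']) # (ys' @ [New \<beta>' \<alpha>']) # S2')) as"
  shows "{\<alpha>', \<beta>'} = {\<alpha>, \<beta>} \<and>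
    mset (S1' @ (xs' @ [New \<alpha>' \<beta>']) # (ys' @ [New \<beta>' \<alpha>']) # S2')
      = mset (S1 @ (xs @ [New \<alpha> \<beta>]) # (ys @ [New \<beta> \<alpha>]) # S2)"
proof -
  define P where "P = min (short (last (\<beta> # ys))) (short (last (\<alpha> # xs)))"
  define Q where "Q = max (short (last (\<beta> # ys))) (short (last (\<alpha> # xs)))"
  define Q' where "Q' = max (short (last (\<beta>' # ys'))) (short (last (\<alpha>' # xs')))"
  have "cyclically_sorted (map short R)" "cyclically_sorted (map short R')"
    using valid unfolding valid_position_def by simp_all
  note arcs = move_arc_split[OF this(1) rot, folded P_def Q_def]
    and arcs' = move_arc_split[OF this(2) rot', unfolded same_entry, folded P_def Q'_def]
  have "R' \<in> set (S1 @ R # S2)" using mset by (metis in_set_conv_decomp mset_eq_setD)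
  then have R': "R' = R" using valid_position_region_eq[OF valid(1)] arcs arcs' by auto
  let ?N = "{#z \<in># mset as. z \<in> labels R#}"
  have "parking_on (labels R \<inter> {P<..Q}) {#z \<in># ?N. z \<in> {P<..Q}#}"
    using park move_parking_sequence_iff[OF valid(1) rot, folded P_def Q_def]
    by (simp add: filter_filter_mset)
  moreover have "parking_on (labels R \<inter> {P<..Q'}) {#z \<in># ?N. z \<in> {P<..Q'}#}"
    using park' move_parking_sequence_iff[OF valid(2) rot', unfolded same_entry, folded P_def Q'_def]
    unfolding R' by (simp add: filter_filter_mset)
  moreover have "finite (labels R)" unfolding labels_def by simp
  \<comment> \<open>the same entry forces the same region and the same arc; the arms are then the cyclic
    successors of its end points\<close>
  ultimately have "Q' = Q" using parking_on_arc_unique[of "labels R" ?N] arcs arcs' unfolding R' by auto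
  then have "short ` {\<alpha>', \<beta>'} = short ` {\<alpha>, \<beta>}" using arcs arcs' unfolding R' by simp
  moreover have "inj_on short (set R)"
    using valid_position_distinct_region[OF valid(1)] by (simp add: distinct_map)
  moreover have "set (\<alpha> # xs @ \<beta> # ys) = set R" "set (\<alpha>' # xs' @ \<beta>' # ys') = set R"
    using rot rot' unfolding R' by (metis set_rotate)+
  then have "{\<alpha>, \<beta>} \<subseteq> set R" "{\<alpha>', \<beta>'} \<subseteq> set R" by auto
  ultimately have pair: "{\<alpha>', \<beta>'} = {\<alpha>, \<beta>}" using inj_on_image_eq_iff by metis
  have "distinct R" using valid_position_distinct_region[OF valid(1)] by (simp add: distinct_map)
  from move_determined_by_arms[OF this rot rot'[unfolded R'] pair] pair mset show ?thesis
    unfolding R' by simp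
qed

lemma play_deterministic:
  "play S ms as \<Longrightarrow> valid_position S \<Longrightarrow> valid_position S' \<Longrightarrow> mset S' = mset S \<Longrightarrow> play S' ms' as
    \<Longrightarrow> ms = ms'"
proof (induction arbitrary: S' ms' rule: play.induct)
  case (stop S)
  from stop.prems(4) show ?case by cases auto
next
  case (step S S1 R S2 k \<alpha> xs \<beta> ys ms as)
  from step.prems(4) obtain S1' R' S2' k' \<alpha>' xs' \<beta>' ys' ms0' where
    S': "S' = S1' @ R' # S2'" and rot': "rotate k' R' = \<alpha>' # xs' @ \<beta>' # ys'"
    and play': "play (S1' @ (xs' @ [New \<alpha>' \<beta>']) # (ys' @ [New \<beta>' \<alpha>']) # S2') ms0' as"
    and ms': "ms' = {\<alpha>', \<beta>'} # ms0'"
    and same_entry: "min (short (last (\<beta>' # ys'))) (short (last (\<alpha>' # xs')))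
      = min (short (last (\<beta> # ys))) (short (last (\<alpha> # xs)))"
    by cases auto
  have valid: "valid_position (S1 @ R # S2)" "valid_position (S1' @ R' # S2')"
    using step.prems(1,2) step.hyps(1) S' by simp_all
  have mset: "mset (S1' @ R' # S2') = mset (S1 @ R # S2)" using step.prems(3) step.hyps(1) S' by simp
  note valid_next = valid_position_move[OF valid(1) step.hyps(2)] valid_position_move[OF valid(2) rot']
  have pair: "{\<alpha>', \<beta>'} = {\<alpha>, \<beta>}"
    and next_mset: "mset (S1' @ (xs' @ [New \<alpha>' \<beta>']) # (ys' @ [New \<beta>' \<alpha>']) # S2')
      = mset (S1 @ (xs @ [New \<alpha> \<beta>]) # (ys @ [New \<beta> \<alpha>]) # S2)"
    using move_determined_by_sequence[OF valid mset step.hyps(2) rot' same_entry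
        play_parking_sequence[OF step.hyps(4) valid_next(1)] play_parking_sequence[OF play' valid_next(2)]]
    by blast+
  have "ms = ms0'" using step.IH[OF valid_next next_mset play'] .
  then show ?case using ms' pair by simp
qed

section \<open>The initial position\<close>

lemma sorted_nth_le_Suc_iff:
  fixes s :: "nat list"
  assumes "sorted s"
  shows "(\<forall>i<length s. s ! i \<le> Suc i) \<longleftrightarrow> (\<forall>x\<le>length s. x \<le> length (filter (\<lambda>z. z \<le> x) s))"
proof
  assume bound: "\<forall>i<length s. s ! i \<le> Suc i"
  show "\<forall>x\<le>length s. x \<le> length (filter (\<lambda>z. z \<le> x) s)"
  proof (intro allI impI)
    fix x assume "x \<le> length s"
    have "\<forall>z\<in>set (take x s). z \<le> x"
    proof
      fix z assume "z \<in> set (take x s)"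
      then obtain i where "i < x" "i < length s" "z = s ! i" by (auto simp: in_set_conv_nth)
      then show "z \<le> x" using bound by (metis Suc_leI le_trans)
    qed
    then have "length (filter (\<lambda>z. z \<le> x) (take x s)) = x" using \<open>x \<le> length s\<close> by simp
    moreover have "filter (\<lambda>z. z \<le> x) s = filter (\<lambda>z. z \<le> x) (take x s) @ filter (\<lambda>z. z \<le> x) (drop x s)"
      by (metis append_take_drop_id filter_append)
    ultimately show "x \<le> length (filter (\<lambda>z. z \<le> x) s)" by simp
  qed
next
  assume count: "\<forall>x\<le>length s. x \<le> length (filter (\<lambda>z. z \<le> x) s)"
  show "\<forall>i<length s. s ! i \<le> Suc i"
  proof (intro allI impI, rule ccontr)
    fix i assume i: "i < length s" and "\<not> s ! i \<le> Suc i"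
    have "\<forall>z\<in>set (drop i s). \<not> z \<le> Suc i"
    proof
      fix z assume "z \<in> set (drop i s)"
      then obtain j where "j < length s - i" "z = s ! (i + j)" by (auto simp: in_set_conv_nth)
      then have "s ! i \<le> z" using sorted_nth_mono[OF assms, of i "i + j"] by simp
      then show "\<not> z \<le> Suc i" using \<open>\<not> s ! i \<le> Suc i\<close> by simp
    qed
    then have "filter (\<lambda>z. z \<le> Suc i) s = filter (\<lambda>z. z \<le> Suc i) (take i s)"
      by (metis append_Nil2 append_take_drop_id filter_append filter_False)
    then have "length (filter (\<lambda>z. z \<le> Suc i) s) \<le> i"
      by (metis length_filter_le length_take min.bounded_iff)
    then show False using count i by (metis Suc_leI not_less_eq_eq)
  qed
qed

lemma parking_on_atLeastAtMost_iff:
  assumes "1 \<le> n"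
  shows "parking_on {1..n} (mset as) \<longleftrightarrow> parking_function (n - 1) as"
proof -
  let ?s = "sort as"
  let ?cnt = "\<lambda>x. length (filter (\<lambda>z. z \<le> x) ?s)"
  have Max: "Max {1..n} = n" using assms by (intro Max_eqI) auto
  have "count_le (mset as) x = ?cnt x" for x
    unfolding count_le_def by (metis mset_filter size_mset mset_sort)
  moreover have "card_le {1..n} x = x" if "x \<le> n" for x
  proof -
    have "{z \<in> {1..n}. z \<le> x} = {1..x}" using that by auto
    then show ?thesis unfolding card_le_def by simp
  qed
  ultimately have "parking_on {1..n} (mset as) \<longleftrightarrow>
      length as = n - 1 \<and> set as \<subseteq> {1..n} \<and> (\<forall>x<n. x \<le> ?cnt x)"
    unfolding parking_on_def Max using assms by auto
  also have "\<dots> \<longleftrightarrow> length as = n - 1 \<and> set as \<subseteq> {1..n - 1} \<and> (\<forall>i<n - 1. ?s ! i \<le> Suc i)"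
  proof (cases "length as = n - 1")
    case True
    then have counts: "(\<forall>x<n. x \<le> ?cnt x) \<longleftrightarrow> (\<forall>i<n - 1. ?s ! i \<le> Suc i)"
      using sorted_nth_le_Suc_iff[of ?s] assms by (auto simp: less_Suc_eq_le)
    have "set as \<subseteq> {1..n - 1}" if "set as \<subseteq> {1..n}" "\<forall>x<n. x \<le> ?cnt x"
    proof -
      have "n - 1 \<le> ?cnt (n - 1)" using spec[OF that(2), of "n - 1"] assms by simp
      then have "\<not> ?cnt (n - 1) < length ?s" using True by simp
      then have "\<forall>z\<in>set ?s. z \<le> n - 1" by (metis length_filter_less)
      then show ?thesis using that(1) by auto
    qed
    moreover have "{1..n - 1} \<subseteq> {1..n}" by auto
    ultimately show ?thesis using counts by blast
  qed simp
  also have "\<dots> \<longleftrightarrow> parking_function (n - 1) as" unfolding parking_function_def by simp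
  finally show ?thesis .
qed

lemma valid_position_init_pos:
  assumes "1 \<le> n" shows "valid_position (init_pos n)"
proof -
  have "map short (map Orig [1..<n + 1]) = [1..<n + 1]" by (simp add: comp_def)
  moreover have "cyclically_sorted [1..<n + 1]"
    unfolding cyclically_sorted_def by (metis sorted_wrt_upt rotate0 id_apply)
  ultimately show ?thesis unfolding valid_position_def init_pos_def using assms by simp
qed

lemma labels_init_pos: "labels ` set (init_pos n) = {{1..n}}"
  unfolding init_pos_def labels_def by (auto simp: image_image atLeastLessThanSuc_atLeastAtMost)

lemma parking_sequence_init_pos_iff:
  assumes "1 \<le> n"
  shows "parking_sequence (labels ` set (init_pos n)) as \<longleftrightarrow> parking_function (n - 1) as"
proof -
  have "{#z \<in># mset as. z \<in> {1..n}#} = mset as" if "set as \<subseteq> {1..n}"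
    using that by (simp add: filter_mset_eq_conv subset_code(1))
  moreover have "set as \<subseteq> {1..n}" if "parking_on {1..n} (mset as)"
    using that unfolding parking_on_def by simp
  ultimately show ?thesis
    unfolding labels_init_pos parking_sequence_def parking_on_atLeastAtMost_iff[OF assms, symmetric]
    by auto
qed

theorem theorem4:
  fixes n :: nat
  assumes "n \<ge> 2"
  shows "(\<forall>ms ms' as. play (init_pos n) ms as \<and> play (init_pos n) ms' as \<longrightarrow> ms = ms')
       \<and> {as. \<exists>ms. play (init_pos n) ms as} = {a. parking_function (n - 1) a}"
proof -
  have "1 \<le> n" using assms by simp
  then have valid: "valid_position (init_pos n)" by (rule valid_position_init_pos)
  have "ms = ms'" if "play (init_pos n) ms as" "play (init_pos n) ms' as" for ms ms' as
    using play_deterministic[OF that(1) valid valid refl that(2)] .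
  moreover have "(\<exists>ms. play (init_pos n) ms as) \<longleftrightarrow> parking_function (n - 1) as" for as
    using play_parking_sequence[OF _ valid] parking_sequence_play[OF valid]
      parking_sequence_init_pos_iff[OF \<open>1 \<le> n\<close>] by blast
  ultimately show ?thesis by blast
qed

end
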